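(* Let $Q_1,Q_2\ge1$ be integers, $\lambda_1,\lambda_2,\mu>0$, $p_{12},p_{21}\in[0,1]$, $s=\lambda_1+\lambda_2$, $s_1=\lambda_1+\lambda_2p_{21}$, $s_2=\lambda_2+\lambda_1p_{12}$, and $$q_i=\frac{\lambda_i}{s+\mu}\ (i=1,2),\quad q_3=\frac{\mu}{s+\mu},\quad A_1=\frac{s_1}{s_1+\mu},\quad A_2=\frac{s_2}{s_2+\mu},\quad B_1=\frac{\lambda_1}{s_2+\mu},\quad B_2=\frac{\lambda_2}{s_1+\mu}.$$ Then the stationary distribution $(\pi_{(j_1,j_2)})$ of the inventory CTMC with random replenishment (see context) is: $$\pi_{(Q_1-i_1,Q_2-i_2)}=\binom{i_1+i_2}{i_1}q_1^{i_1}q_2^{i_2}q_3,\quad 0\le i_1\le Q_1-1,\ 0\le i_2\le Q_2-1;$$ $$\pi_{(Q_1-i_1,0)}=B_2q_2^{Q_2-1}q_3\sum_{k=0}^{i_1}A_1^{i_1-k}q_1^k\binom{Q_2+k-1}{k},\quad 0\le i_1\le Q_1-1;$$ $$\pi_{(0,Q_2-i_2)}=B_1q_1^{Q_1-1}q_3\sum_{k=0}^{i_2}A_2^{i_2-k}q_2^k\binom{Q_1+k-1}{k},\quad 0\le i_2\le Q_2-1;$$ $$\pi_{(0,0)}=\frac{s_1}{\mu}B_2q_2^{Q_2-1}q_3\sum_{k=0}^{Q_1-1}A_1^{Q_1-1-k}q_1^k\binom{Q_2+k-1}{k}+\frac{s_2}{\mu}B_1q_1^{Q_1-1}q_3\s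um_{k=0}^{Q_2-1}A_2^{Q_2-1-k}q_2^k\binom{Q_1+k-1}{k}.$$
   Context: Inventory CTMC with random replenishment: state space $\{0,\dots,Q_1\}\times\{0,\dots,Q_2\}$; demand transitions: from $(i_1,i_2)$ with $i_1,i_2\ge1$, to $(i_1-1,i_2)$ at rate $\lambda_1$ and to $(i_1,i_2-1)$ at rate $\lambda_2$; from $(i_1,0)$ with $i_1\ge1$, to $(i_1-1,0)$ at rate $s_1$; from $(0,i_2)$ with $i_2\ge1$, to $(0,i_2-1)$ at rate $s_2$; no demand transitions out of $(0,0)$. In addition, from every state there is a replenishment transition to $(Q_1,Q_2)$ at rate $\mu$. (This models Poisson arrivals of rate $\lambda_i$ for product $i$, a customer for out-of-stock product $i$ buying the other product $j$ w.p. $p_{ij}$ if it is in stock, and exponential($\mu$) replenishment times restoring both stocks to $(Q_1,Q_2)$.) *)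

theory Defs
  imports Complex_Main
begin

definition inv_states :: "nat \<Rightarrow> nat \<Rightarrow> (nat \<times> nat) set" where
  "inv_states Q1 Q2 = {0..Q1} \<times> {0..Q2}"

text \<open>Self-loops (replenishment from (Q1,Q2) to itself) carry no rate.\<close>
definition inv_rate :: "nat \<Rightarrow> nat \<Rightarrow> real \<Rightarrow> real \<Rightarrow> real \<Rightarrow> real \<Rightarrow> real
    \<Rightarrow> nat \<times> nat \<Rightarrow> nat \<times> nat \<Rightarrow> real" where
  "inv_rate Q1 Q2 l1 l2 p12 p21 mu x y =
     (if x = y then 0 else
       (case x of (i1, i2) \<Rightarrow>
          (if 1 \<le> i1 \<and> 1 \<le> i2 then
             (if y = (i1 - 1, i2) then l1 else 0) + (if y = (i1, i2 - 1) then l2 else 0)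
           else if 1 \<le> i1 \<and> i2 = 0 then
             (if y = (i1 - 1, 0) then l1 + l2 * p21 else 0)
           else if i1 = 0 \<and> 1 \<le> i2 then
             (if y = (0, i2 - 1) then l2 + l1 * p12 else 0)
           else 0))
       + (if y = (Q1, Q2) then mu else 0))"

definition inv_stationary :: "nat \<Rightarrow> nat \<Rightarrow> real \<Rightarrow> real \<Rightarrow> real \<Rightarrow> real \<Rightarrow> real
    \<Rightarrow> (nat \<times> nat \<Rightarrow> real) \<Rightarrow> bool" where
  "inv_stationary Q1 Q2 l1 l2 p12 p21 mu \<pi> \<longleftrightarrow>
     (\<forall>x\<in>inv_states Q1 Q2. 0 \<le> \<pi> x) \<and>
     (\<Sum>x\<in>inv_states Q1 Q2. \<pi> x) = 1 \<and>
     (\<forall>y\<in>inv_states Q1 Q2.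
        (\<Sum>x\<in>inv_states Q1 Q2. \<pi> x * inv_rate Q1 Q2 l1 l2 p12 p21 mu x y)
        = \<pi> y * (\<Sum>z\<in>inv_states Q1 Q2. inv_rate Q1 Q2 l1 l2 p12 p21 mu y z))"

end

theory Submission
  imports Defs
begin

text \<open>Demand only ever lowers the stock vector and replenishment jumps to the full state
  \<open>(Q1, Q2)\<close>. So away from \<open>(Q1, Q2)\<close> the balance equations are triangular,
  \<open>\<pi> y (exit rate of y + mu) = inflow into y from (y1 + 1, y2) and (y1, y2 + 1)\<close>,
  and determine \<pi> recursively from \<open>\<pi> (Q1, Q2)\<close>. Since the balance defects always sum to
  zero, the remaining equation at \<open>(Q1, Q2)\<close> is redundant and, together with normalisation,
  reads \<open>\<pi> (Q1, Q2) = q3\<close>. It then suffices to check the closed form against the local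
  equations: in the interior this is Pascal's rule, and along an edge the recursion
  \<open>\<pi> (j, 0) (s1 + mu) = s1 \<pi> (j + 1, 0) + l2 \<pi> (j, 1)\<close> unrolls to the stated sums.\<close>

lemma sum_mult_if_eq:
  fixes g :: "'a \<Rightarrow> real"
  assumes "finite A"
  shows "(\<Sum>x\<in>A. g x * (if x = a then c else 0)) = (if a \<in> A then g a * c else 0)"
  using assms by (simp add: if_distrib[of "\<lambda>t. g _ * t"] sum.delta cong: if_cong)

lemma all_le_pred_reflect:
  fixes Q :: nat
  assumes "1 \<le> Q"
  shows "(\<forall>i. i \<le> Q - 1 \<longrightarrow> P i) \<longleftrightarrow> (\<forall>j. 1 \<le> j \<and> j \<le> Q \<longrightarrow> P (Q - j))"
proof
  assume "\<forall>i. i \<le> Q - 1 \<longrightarrow> P i"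
  moreover have "Q - j \<le> Q - 1" if "1 \<le> j" for j
    using that by simp
  ultimately show "\<forall>j. 1 \<le> j \<and> j \<le> Q \<longrightarrow> P (Q - j)"
    by blast
next
  assume reflected: "\<forall>j. 1 \<le> j \<and> j \<le> Q \<longrightarrow> P (Q - j)"
  show "\<forall>i. i \<le> Q - 1 \<longrightarrow> P i"
  proof (intro allI impI)
    fix i assume "i \<le> Q - 1"
    then show "P i"
      using reflected[rule_format, of "Q - i"] assms by simp
  qed
qed

lemma all_le_pred_reflect2:
  fixes Q1 Q2 :: nat
  assumes "1 \<le> Q1" "1 \<le> Q2"
  shows "(\<forall>i1 i2. i1 \<le> Q1 - 1 \<and> i2 \<le> Q2 - 1 \<longrightarrow> P i1 i2)
     \<longleftrightarrow> (\<forall>j1 j2. 1 \<le> j1 \<and> j1 \<le> Q1 \<and> 1 \<le> j2 \<and> j2 \<le> Q2 \<longrightarrow> P (Q1 - j1) (Q2 - j2))"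
proof -
  have "(\<forall>i1 i2. i1 \<le> Q1 - 1 \<and> i2 \<le> Q2 - 1 \<longrightarrow> P i1 i2)
      \<longleftrightarrow> (\<forall>i1. i1 \<le> Q1 - 1 \<longrightarrow> (\<forall>i2. i2 \<le> Q2 - 1 \<longrightarrow> P i1 i2))"
    by blast
  also have "\<dots> \<longleftrightarrow> (\<forall>j1. 1 \<le> j1 \<and> j1 \<le> Q1 \<longrightarrow> (\<forall>j2. 1 \<le> j2 \<and> j2 \<le> Q2 \<longrightarrow> P (Q1 - j1) (Q2 - j2)))"
    by (simp only: all_le_pred_reflect[OF assms(1)] all_le_pred_reflect[OF assms(2)])
  finally show ?thesis
    by blast
qed

definition boundary_sum :: "real \<Rightarrow> real \<Rightarrow> nat \<Rightarrow> nat \<Rightarrow> real" where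
  "boundary_sum A q Q i = (\<Sum>k=0..i. A ^ (i - k) * q ^ k * real ((Q + k - 1) choose k))"

lemma boundary_sum_0 [simp]: "boundary_sum A q Q 0 = 1"
  by (simp add: boundary_sum_def)

lemma boundary_sum_Suc:
  "boundary_sum A q Q (Suc i) = A * boundary_sum A q Q i + q ^ Suc i * real ((Q + i) choose Suc i)"
proof -
  have "(\<Sum>k=0..i. A ^ (Suc i - k) * q ^ k * real ((Q + k - 1) choose k))
      = A * (\<Sum>k=0..i. A ^ (i - k) * q ^ k * real ((Q + k - 1) choose k))"
    by (simp add: sum_distrib_left Suc_diff_le mult.assoc)
  then show ?thesis
    by (simp add: boundary_sum_def)
qed

lemma boundary_sum_nonneg: "0 \<le> A \<Longrightarrow> 0 \<le> q \<Longrightarrow> 0 \<le> boundary_sum A q Q i"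
  by (simp add: boundary_sum_def sum_nonneg)

lemma boundary_sum_balance:
  assumes "B * (r + mu) = l" and "B * r = l * A"
  shows "B * boundary_sum A q Q (Suc i) * (r + mu)
       = B * boundary_sum A q Q i * r + l * q ^ Suc i * real ((Q + i) choose Suc i)"
proof -
  have "B * boundary_sum A q Q (Suc i) * (r + mu)
      = (l * A) * boundary_sum A q Q i + l * q ^ Suc i * real ((Q + i) choose Suc i)"
    by (simp add: boundary_sum_Suc algebra_simps flip: assms(1))
  then show ?thesis by (simp add: assms(2) flip: mult.assoc)
qed

lemma binomial_weight_pascal:
  fixes x y :: real
  shows "real ((Suc a + Suc b) choose Suc a) * x ^ Suc a * y ^ Suc b
       = real ((a + Suc b) choose a) * x ^ a * y ^ Suc b * x
       + real ((Suc a + b) choose Suc a) * x ^ Suc a * y ^ b * y"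
proof -
  have "(Suc a + Suc b) choose Suc a = ((a + Suc b) choose a) + ((a + Suc b) choose Suc a)"
    by simp
  moreover have "Suc a + b = a + Suc b" by simp
  ultimately show ?thesis by (simp add: algebra_simps)
qed

lemma sum_balance_defects_eq_0:
  fixes r :: "'a \<Rightarrow> 'a \<Rightarrow> real"
  assumes "finite S"
  shows "(\<Sum>y\<in>S. (\<Sum>x\<in>S. \<pi> x * r x y) - \<pi> y * (\<Sum>z\<in>S. r y z)) = 0"
proof -
  have "(\<Sum>y\<in>S. \<Sum>x\<in>S. \<pi> x * r x y) = (\<Sum>x\<in>S. \<pi> x * (\<Sum>y\<in>S. r x y))"
    by (subst sum.swap) (simp add: sum_distrib_left)
  then show ?thesis by (simp add: sum_subtractf)
qed

lemma balance_at_last_state: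
  fixes r :: "'a \<Rightarrow> 'a \<Rightarrow> real"
  assumes "finite S" "y0 \<in> S"
    and "\<And>y. y \<in> S \<Longrightarrow> y \<noteq> y0 \<Longrightarrow> (\<Sum>x\<in>S. \<pi> x * r x y) = \<pi> y * (\<Sum>z\<in>S. r y z)"
  shows "(\<Sum>x\<in>S. \<pi> x * r x y0) = \<pi> y0 * (\<Sum>z\<in>S. r y0 z)"
proof -
  let ?d = "\<lambda>y. (\<Sum>x\<in>S. \<pi> x * r x y) - \<pi> y * (\<Sum>z\<in>S. r y z)"
  have "0 = ?d y0 + (\<Sum>y\<in>S - {y0}. ?d y)"
    using sum_balance_defects_eq_0[OF assms(1)] sum.remove[OF assms(1,2), of ?d] by simp
  also have "(\<Sum>y\<in>S - {y0}. ?d y) = 0"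
    using assms(3) by simp
  finally show ?thesis by simp
qed

text \<open>The demand part of \<open>inv_rate\<close>, written by target state: the only sources are the
  two upper neighbours of the target.\<close>
definition demand_rate :: "real \<Rightarrow> real \<Rightarrow> real \<Rightarrow> real \<Rightarrow> nat \<times> nat \<Rightarrow> nat \<times> nat \<Rightarrow> real" where
  "demand_rate l1 l2 s1 s2 x y =
     (if x = (fst y + 1, snd y) then (if 1 \<le> snd y then l1 else s1) else 0)
   + (if x = (fst y, snd y + 1) then (if 1 \<le> fst y then l2 else s2) else 0)"

lemma demand_rate_from:
  "demand_rate l1 l2 s1 s2 x z =
     (if 1 \<le> fst x \<and> z = (fst x - 1, snd x) then (if 1 \<le> snd x then l1 else s1) else 0)
   + (if 1 \<le> snd x \<and> z = (fst x, snd x - 1) then (if 1 \<le> fst x then l2 else s2) else 0)"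
  by (cases x; cases z) (auto simp: demand_rate_def)

lemma inv_rate_eq_demand_rate:
  "inv_rate Q1 Q2 l1 l2 p12 p21 mu x y =
     demand_rate l1 l2 (l1 + l2 * p21) (l2 + l1 * p12) x y
   + (if y = (Q1, Q2) \<and> x \<noteq> y then mu else 0)"
proof -
  obtain i1 i2 j1 j2 where xy: "x = (i1, i2)" "y = (j1, j2)"
    by fastforce
  show ?thesis
    unfolding xy inv_rate_def demand_rate_def
    by (cases "i1 = 0"; cases "i2 = 0") (simp_all split del: if_split, simp_all)
qed

locale inventory_model =
  fixes Q1 Q2 :: nat and l1 l2 mu p12 p21 s s1 s2 q1 q2 q3 A1 A2 B1 B2 :: real
  assumes Q1: "1 \<le> Q1" and Q2: "1 \<le> Q2"
    and l1: "0 < l1" and l2: "0 < l2" and mu: "0 < mu"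
    and p12: "0 \<le> p12" and p21: "0 \<le> p21"
    and s_def: "s = l1 + l2" and s1_def: "s1 = l1 + l2 * p21" and s2_def: "s2 = l2 + l1 * p12"
    and q1_def: "q1 = l1 / (s + mu)" and q2_def: "q2 = l2 / (s + mu)" and q3_def: "q3 = mu / (s + mu)"
    and A1_def: "A1 = s1 / (s1 + mu)" and A2_def: "A2 = s2 / (s2 + mu)"
    and B1_def: "B1 = l1 / (s2 + mu)" and B2_def: "B2 = l2 / (s1 + mu)"
begin

abbreviation "states \<equiv> inv_states Q1 Q2"
abbreviation "rate \<equiv> inv_rate Q1 Q2 l1 l2 p12 p21 mu"
abbreviation "full \<equiv> (Q1, Q2)"

lemma finite_states: "finite states"
  by (simp add: inv_states_def)

lemma full_in_states: "full \<in> states"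
  by (simp add: inv_states_def)

definition inflow :: "(nat \<times> nat \<Rightarrow> real) \<Rightarrow> nat \<times> nat \<Rightarrow> real" where
  "inflow g y =
     (if fst y < Q1 then g (fst y + 1, snd y) * (if 1 \<le> snd y then l1 else s1) else 0)
   + (if snd y < Q2 then g (fst y, snd y + 1) * (if 1 \<le> fst y then l2 else s2) else 0)"

definition demand_exit_rate :: "nat \<times> nat \<Rightarrow> real" where
  "demand_exit_rate y =
     (if 1 \<le> fst y then (if 1 \<le> snd y then l1 else s1) else 0)
   + (if 1 \<le> snd y then (if 1 \<le> fst y then l2 else s2) else 0)"

lemma s1_nonneg: "0 \<le> s1" and s2_nonneg: "0 \<le> s2"
  using s1_def s2_def l1 l2 p12 p21 by simp_all

lemma demand_exit_rate_nonneg: "0 \<le> demand_exit_rate y"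
  using s1_nonneg s2_nonneg l1 l2 by (simp add: demand_exit_rate_def)

lemma sum_rate_into:
  assumes "y \<in> states"
  shows "(\<Sum>x\<in>states. g x * rate x y)
       = inflow g y + (if y = full then mu * ((\<Sum>x\<in>states. g x) - g y) else 0)"
proof -
  have "(\<Sum>x\<in>states. g x * demand_rate l1 l2 s1 s2 x y) =
      (\<Sum>x\<in>states. g x * (if x = (fst y + 1, snd y) then (if 1 \<le> snd y then l1 else s1) else 0))
    + (\<Sum>x\<in>states. g x * (if x = (fst y, snd y + 1) then (if 1 \<le> fst y then l2 else s2) else 0))"
    by (simp add: demand_rate_def distrib_left sum.distrib)
  also have "\<dots> = inflow g y"
    using assms by (simp only: sum_mult_if_eq[OF finite_states]) (auto simp: inflow_def inv_states_def)
  finally have demand: "(\<Sum>x\<in>states. g x * demand_rate l1 l2 s1 s2 x y) = inflow g y" .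
  have "(\<Sum>x\<in>states. g x * (if y = full \<and> x \<noteq> y then mu else 0))
      = (\<Sum>x\<in>states. (if y = full then mu * g x else 0) - (if x = y \<and> y = full then mu * g y else 0))"
    by (rule sum.cong) auto
  also have "\<dots> = (if y = full then mu * ((\<Sum>x\<in>states. g x) - g y) else 0)"
    using assms full_in_states by (simp add: sum_subtractf sum_distrib_left sum.delta[OF finite_states] right_diff_distrib)
  finally show ?thesis
    using demand by (simp add: inv_rate_eq_demand_rate s1_def s2_def distrib_left sum.distrib)
qed

lemma sum_rate_out:
  assumes "y \<in> states"
  shows "(\<Sum>z\<in>states. rate y z) = demand_exit_rate y + (if y = full then 0 else mu)"
proof -
  have "(\<Sum>z\<in>states. demand_rate l1 l2 s1 s2 y z) =
      (\<Sum>z\<in>states. if z = (fst y - 1, snd y) then (if 1 \<le> fst y then (if 1 \<le> snd y then l1 else s1) else 0) else 0)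
    + (\<Sum>z\<in>states. if z = (fst y, snd y - 1) then (if 1 \<le> snd y then (if 1 \<le> fst y then l2 else s2) else 0) else 0)"
    by (auto simp: demand_rate_from sum.distrib intro!: sum.cong)
  also have "\<dots> = demand_exit_rate y"
    using assms by (simp only: sum.delta[OF finite_states]) (auto simp: demand_exit_rate_def inv_states_def)
  finally have demand: "(\<Sum>z\<in>states. demand_rate l1 l2 s1 s2 y z) = demand_exit_rate y" .
  have "(\<Sum>z\<in>states. rate y z) = (\<Sum>z\<in>states. demand_rate l1 l2 s1 s2 y z)
      + (\<Sum>z\<in>states. if z = full then (if y \<noteq> full then mu else 0) else 0)"
    unfolding inv_rate_eq_demand_rate s1_def s2_def sum.distrib[symmetric]
    by (rule sum.cong) auto
  then show ?thesis
    using demand full_in_states by (simp add: sum.delta[OF finite_states])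
qed

lemma s_mu_pos: "0 < s + mu"
  using s_def l1 l2 mu by simp

lemma stationary_iff_local_balance:
  "inv_stationary Q1 Q2 l1 l2 p12 p21 mu \<pi> \<longleftrightarrow>
     (\<forall>x\<in>states. 0 \<le> \<pi> x) \<and> \<pi> full = q3 \<and>
     (\<forall>y\<in>states - {full}. \<pi> y * (demand_exit_rate y + mu) = inflow \<pi> y)"
proof -
  have balance_iff: "(\<Sum>x\<in>states. \<pi> x * rate x y) = \<pi> y * (\<Sum>z\<in>states. rate y z)
      \<longleftrightarrow> \<pi> y * (demand_exit_rate y + mu) = inflow \<pi> y" if "y \<in> states - {full}" for y
    using that sum_rate_into[of y] sum_rate_out[of y] by auto
  have full_balance_iff: "(\<Sum>x\<in>states. \<pi> x * rate x full) = \<pi> full * (\<Sum>z\<in>states. rate full z)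
      \<longleftrightarrow> mu * (\<Sum>x\<in>states. \<pi> x) = \<pi> full * (s + mu)"
  proof -
    have "(\<Sum>x\<in>states. \<pi> x * rate x full) = mu * ((\<Sum>x\<in>states. \<pi> x) - \<pi> full)"
      using sum_rate_into[OF full_in_states, of \<pi>] by (simp add: inflow_def)
    moreover have "(\<Sum>z\<in>states. rate full z) = s"
      using sum_rate_out[OF full_in_states] Q1 Q2 by (simp add: demand_exit_rate_def s_def)
    ultimately show ?thesis by (auto simp: algebra_simps)
  qed
  show ?thesis
  proof
    assume "inv_stationary Q1 Q2 l1 l2 p12 p21 mu \<pi>"
    then show "(\<forall>x\<in>states. 0 \<le> \<pi> x) \<and> \<pi> full = q3 \<and>
        (\<forall>y\<in>states - {full}. \<pi> y * (demand_exit_rate y + mu) = inflow \<pi> y)"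
      using balance_iff full_balance_iff[THEN iffD1] full_in_states s_mu_pos
      by (auto simp: inv_stationary_def q3_def field_simps)
  next
    assume local: "(\<forall>x\<in>states. 0 \<le> \<pi> x) \<and> \<pi> full = q3 \<and>
        (\<forall>y\<in>states - {full}. \<pi> y * (demand_exit_rate y + mu) = inflow \<pi> y)"
    then have balance: "\<forall>y\<in>states. (\<Sum>x\<in>states. \<pi> x * rate x y) = \<pi> y * (\<Sum>z\<in>states. rate y z)"
      using balance_at_last_state[OF finite_states full_in_states] balance_iff by blast
    then have "mu * (\<Sum>x\<in>states. \<pi> x) = mu"
      using full_balance_iff local full_in_states s_mu_pos by (simp add: q3_def)
    then show "inv_stationary Q1 Q2 l1 l2 p12 p21 mu \<pi>"
      using balance local mu by (simp add: inv_stationary_def)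
  qed
qed

lemma local_balance_unique:
  assumes g: "\<forall>y\<in>states - {full}. g y * (demand_exit_rate y + mu) = inflow g y"
    and h: "\<forall>y\<in>states - {full}. h y * (demand_exit_rate y + mu) = inflow h y"
    and "g full = h full"
  shows "\<forall>y\<in>states. g y = h y"
proof
  fix y assume "y \<in> states"
  then show "g y = h y"
  proof (induction y rule: measure_induct_rule[where f = "\<lambda>y. (Q1 - fst y) + (Q2 - snd y)"])
    case (less y)
    show ?case
    proof (cases "y = full")
      case False
      have "g (fst y + 1, snd y) = h (fst y + 1, snd y)" if "fst y < Q1"
        using less.IH less.prems that by (auto simp: inv_states_def)
      moreover have "g (fst y, snd y + 1) = h (fst y, snd y + 1)" if "snd y < Q2"
        using less.IH less.prems that by (auto simp: inv_states_def)
      ultimately have "inflow g y = inflow h y"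
        by (simp add: inflow_def)
      then have "g y * (demand_exit_rate y + mu) = h y * (demand_exit_rate y + mu)"
        using g h less.prems False by simp
      moreover have "demand_exit_rate y + mu \<noteq> 0"
        using demand_exit_rate_nonneg[of y] mu by linarith
      ultimately show ?thesis
        by simp
    qed (use assms(3) in simp)
  qed
qed

text \<open>The right-hand sides of the theorem in state coordinates \<open>(j1, j2) = (Q1 - i1, Q2 - i2)\<close>.\<close>
definition pi_closed :: "nat \<times> nat \<Rightarrow> real" where
  "pi_closed y =
     (if 1 \<le> fst y \<and> 1 \<le> snd y then
        real (((Q1 - fst y) + (Q2 - snd y)) choose (Q1 - fst y))
          * q1 ^ (Q1 - fst y) * q2 ^ (Q2 - snd y) * q3
      else if 1 \<le> fst y then B2 * q2 ^ (Q2 - 1) * q3 * boundary_sum A1 q1 Q2 (Q1 - fst y)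
      else if 1 \<le> snd y then B1 * q1 ^ (Q1 - 1) * q3 * boundary_sum A2 q2 Q1 (Q2 - snd y)
      else s1 / mu * B2 * q2 ^ (Q2 - 1) * q3 * boundary_sum A1 q1 Q2 (Q1 - 1)
         + s2 / mu * B1 * q1 ^ (Q1 - 1) * q3 * boundary_sum A2 q2 Q1 (Q2 - 1))"

lemma pi_closed_interior:
  "1 \<le> j1 \<Longrightarrow> 1 \<le> j2 \<Longrightarrow> pi_closed (j1, j2) =
     real (((Q1 - j1) + (Q2 - j2)) choose (Q1 - j1)) * q1 ^ (Q1 - j1) * q2 ^ (Q2 - j2) * q3"
  and pi_closed_edge1:
  "1 \<le> j1 \<Longrightarrow> pi_closed (j1, 0) = B2 * q2 ^ (Q2 - 1) * q3 * boundary_sum A1 q1 Q2 (Q1 - j1)"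
  and pi_closed_edge2:
  "1 \<le> j2 \<Longrightarrow> pi_closed (0, j2) = B1 * q1 ^ (Q1 - 1) * q3 * boundary_sum A2 q2 Q1 (Q2 - j2)"
  and pi_closed_origin:
  "pi_closed (0, 0) = s1 / mu * B2 * q2 ^ (Q2 - 1) * q3 * boundary_sum A1 q1 Q2 (Q1 - 1)
     + s2 / mu * B1 * q1 ^ (Q1 - 1) * q3 * boundary_sum A2 q2 Q1 (Q2 - 1)"
  by (simp_all add: pi_closed_def)

lemma parameters_nonneg: "0 \<le> q1" "0 \<le> q2" "0 \<le> q3" "0 \<le> A1" "0 \<le> A2" "0 \<le> B1" "0 \<le> B2"
  using s_mu_pos s1_nonneg s2_nonneg l1 l2 mu
  by (simp_all add: q1_def q2_def q3_def A1_def A2_def B1_def B2_def)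

lemma pi_closed_nonneg: "0 \<le> pi_closed y"
  using parameters_nonneg s1_nonneg s2_nonneg mu
    boundary_sum_nonneg[of A1 q1] boundary_sum_nonneg[of A2 q2]
  unfolding pi_closed_def by simp

lemma l1_eq: "l1 = q1 * (s + mu)" and l2_eq: "l2 = q2 * (s + mu)"
  using s_mu_pos by (simp_all add: q1_def q2_def)

lemma B2_balance: "B2 * (s1 + mu) = l2" "B2 * s1 = l2 * A1"
  using s1_nonneg mu by (simp_all add: B2_def A1_def)

lemma B1_balance: "B1 * (s2 + mu) = l1" "B1 * s2 = l1 * A2"
  using s2_nonneg mu by (simp_all add: B1_def A2_def)

lemma pi_closed_balance_interior:
  assumes "1 \<le> j1" "j1 \<le> Q1" "1 \<le> j2" "j2 \<le> Q2" "(j1, j2) \<noteq> full"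
  shows "pi_closed (j1, j2) * (s + mu) = inflow pi_closed (j1, j2)"
proof -
  consider (both) a b where "Q1 - j1 = Suc a" "Q2 - j2 = Suc b"
    | (first_full) b where "Q1 - j1 = 0" "Q2 - j2 = Suc b"
    | (second_full) a where "Q1 - j1 = Suc a" "Q2 - j2 = 0"
    using assms by (cases "Q1 - j1"; cases "Q2 - j2") auto
  then show ?thesis
  proof cases
    case (both a b)
    then have "j1 < Q1" "j2 < Q2" "Q1 - Suc j1 = a" "Q2 - Suc j2 = b" by auto
    moreover have "real ((Suc a + Suc b) choose Suc a) * q1 ^ Suc a * q2 ^ Suc b * q3 * (s + mu)
        = real ((a + Suc b) choose a) * q1 ^ a * q2 ^ Suc b * q3 * l1
        + real ((Suc a + b) choose Suc a) * q1 ^ Suc a * q2 ^ b * q3 * l2"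
      using binomial_weight_pascal[of a b q1 q2] by (simp add: l1_eq l2_eq algebra_simps)
    ultimately show ?thesis
      using assms both unfolding inflow_def by (simp add: pi_closed_interior)
  next
    case (first_full b)
    then have "\<not> j1 < Q1" "j2 < Q2" "Q2 - Suc j2 = b" by auto
    then show ?thesis
      using assms first_full unfolding inflow_def by (simp add: pi_closed_interior l2_eq)
  next
    case (second_full a)
    then have "j1 < Q1" "\<not> j2 < Q2" "Q1 - Suc j1 = a" by auto
    then show ?thesis
      using assms second_full unfolding inflow_def by (simp add: pi_closed_interior l1_eq)
  qed
qed

lemma pi_closed_balance_edge1:
  assumes "1 \<le> j1" "j1 \<le> Q1"
  shows "pi_closed (j1, 0) * (s1 + mu) = inflow pi_closed (j1, 0)"
proof -
  have inflow: "inflow pi_closed (j1, 0) =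
      (if j1 < Q1 then pi_closed (Suc j1, 0) * s1 else 0)
    + real ((Q1 - j1 + (Q2 - 1)) choose (Q1 - j1)) * q1 ^ (Q1 - j1) * q2 ^ (Q2 - 1) * q3 * l2"
    using assms Q2 by (simp add: inflow_def pi_closed_interior)
  show ?thesis
  proof (cases "Q1 - j1")
    case 0
    have "B2 * q2 ^ (Q2 - 1) * q3 * (s1 + mu) = q2 ^ (Q2 - 1) * q3 * l2"
      by (simp add: B2_balance(1)[symmetric] algebra_simps)
    moreover have "\<not> j1 < Q1" using 0 by simp
    ultimately show ?thesis
      using assms(1) inflow 0 by (simp add: pi_closed_edge1)
  next
    case (Suc a)
    then have "j1 < Q1" "Q1 - Suc j1 = a" "Q1 - j1 + (Q2 - 1) = Q2 + a" using Q2 by auto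
    then show ?thesis
      using assms inflow Suc
        arg_cong[OF boundary_sum_balance[OF B2_balance, of q1 Q2 a], of "\<lambda>t. q2 ^ (Q2 - 1) * q3 * t"]
      by (simp add: pi_closed_edge1 algebra_simps)
  qed
qed

lemma pi_closed_balance_edge2:
  assumes "1 \<le> j2" "j2 \<le> Q2"
  shows "pi_closed (0, j2) * (s2 + mu) = inflow pi_closed (0, j2)"
proof -
  have "(Q1 - 1 + (Q2 - j2)) choose (Q1 - 1) = (Q1 - 1 + (Q2 - j2)) choose (Q2 - j2)"
    using binomial_symmetric[of "Q2 - j2" "Q1 - 1 + (Q2 - j2)"] by simp
  then have inflow: "inflow pi_closed (0, j2) =
      (if j2 < Q2 then pi_closed (0, Suc j2) * s2 else 0)
    + real ((Q2 - j2 + (Q1 - 1)) choose (Q2 - j2)) * q2 ^ (Q2 - j2) * q1 ^ (Q1 - 1) * q3 * l1"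
    using assms Q1 by (simp add: inflow_def pi_closed_interior add.commute)
  show ?thesis
  proof (cases "Q2 - j2")
    case 0
    have "B1 * q1 ^ (Q1 - 1) * q3 * (s2 + mu) = q1 ^ (Q1 - 1) * q3 * l1"
      by (simp add: B1_balance(1)[symmetric] algebra_simps)
    moreover have "\<not> j2 < Q2" using 0 by simp
    ultimately show ?thesis
      using assms(1) inflow 0 by (simp add: pi_closed_edge2)
  next
    case (Suc a)
    then have "j2 < Q2" "Q2 - Suc j2 = a" "Q2 - j2 + (Q1 - 1) = Q1 + a" using Q1 by auto
    then show ?thesis
      using assms inflow Suc
        arg_cong[OF boundary_sum_balance[OF B1_balance, of q2 Q1 a], of "\<lambda>t. q1 ^ (Q1 - 1) * q3 * t"]
      by (simp add: pi_closed_edge2 algebra_simps)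
  qed
qed

lemma pi_closed_balance_origin: "pi_closed (0, 0) * mu = inflow pi_closed (0, 0)"
  using Q1 Q2 mu by (simp add: inflow_def pi_closed_edge1 pi_closed_edge2 pi_closed_origin field_simps)

lemma pi_closed_local_balance:
  "\<forall>y\<in>states - {full}. pi_closed y * (demand_exit_rate y + mu) = inflow pi_closed y"
proof
  fix y assume y: "y \<in> states - {full}"
  obtain j1 j2 where y_eq: "y = (j1, j2)" and "j1 \<le> Q1" "j2 \<le> Q2"
    using y by (auto simp: inv_states_def)
  then consider "1 \<le> j1" "1 \<le> j2" | "1 \<le> j1" "j2 = 0" | "j1 = 0" "1 \<le> j2" | "j1 = 0" "j2 = 0"
    by linarith
  then show "pi_closed y * (demand_exit_rate y + mu) = inflow pi_closed y"
    using y y_eq pi_closed_balance_interior pi_closed_balance_edge1 pi_closed_balance_edge2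
      pi_closed_balance_origin \<open>j1 \<le> Q1\<close> \<open>j2 \<le> Q2\<close>
    by cases (auto simp: demand_exit_rate_def s_def)
qed

lemma stationary_iff_eq_pi_closed:
  "inv_stationary Q1 Q2 l1 l2 p12 p21 mu \<pi> \<longleftrightarrow> (\<forall>y\<in>states. \<pi> y = pi_closed y)"
proof
  assume "inv_stationary Q1 Q2 l1 l2 p12 p21 mu \<pi>"
  moreover have "pi_closed full = q3"
    using Q1 Q2 by (simp add: pi_closed_interior)
  ultimately show "\<forall>y\<in>states. \<pi> y = pi_closed y"
    using local_balance_unique[OF _ pi_closed_local_balance] stationary_iff_local_balance by simp
next
  assume eq: "\<forall>y\<in>states. \<pi> y = pi_closed y"
  have "inflow \<pi> y = inflow pi_closed y" if "y \<in> states" for y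
    using eq that by (auto simp: inflow_def inv_states_def)
  then show "inv_stationary Q1 Q2 l1 l2 p12 p21 mu \<pi>"
    using eq pi_closed_nonneg pi_closed_local_balance full_in_states Q1 Q2
    by (simp add: stationary_iff_local_balance pi_closed_interior)
qed

lemma ball_states_iff:
  "(\<forall>y\<in>states. P y) \<longleftrightarrow>
     (\<forall>j1 j2. 1 \<le> j1 \<and> j1 \<le> Q1 \<and> 1 \<le> j2 \<and> j2 \<le> Q2 \<longrightarrow> P (j1, j2)) \<and>
     (\<forall>j1. 1 \<le> j1 \<and> j1 \<le> Q1 \<longrightarrow> P (j1, 0)) \<and>
     (\<forall>j2. 1 \<le> j2 \<and> j2 \<le> Q2 \<longrightarrow> P (0, j2)) \<and> P (0, 0)"
  (is "_ \<longleftrightarrow> ?regions")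
proof
  assume ?regions
  show "\<forall>y\<in>states. P y"
  proof
    fix y assume "y \<in> states"
    then obtain j1 j2 where y: "y = (j1, j2)" and "j1 \<le> Q1" "j2 \<le> Q2"
      by (auto simp: inv_states_def)
    consider "1 \<le> j1" "1 \<le> j2" | "1 \<le> j1" "j2 = 0" | "j1 = 0" "1 \<le> j2" | "j1 = 0" "j2 = 0"
      by linarith
    then show "P y"
      using \<open>?regions\<close> y \<open>j1 \<le> Q1\<close> \<open>j2 \<le> Q2\<close> by cases simp_all
  qed
qed (auto simp: inv_states_def)

lemma formulas_iff_eq_pi_closed:
  "((\<forall>i1 i2. i1 \<le> Q1 - 1 \<and> i2 \<le> Q2 - 1 \<longrightarrow>
        \<pi> (Q1 - i1, Q2 - i2) = real ((i1 + i2) choose i1) * q1 ^ i1 * q2 ^ i2 * q3) \<and>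
     (\<forall>i1. i1 \<le> Q1 - 1 \<longrightarrow>
        \<pi> (Q1 - i1, 0) = B2 * q2 ^ (Q2 - 1) * q3 *
          (\<Sum>k=0..i1. A1 ^ (i1 - k) * q1 ^ k * real ((Q2 + k - 1) choose k))) \<and>
     (\<forall>i2. i2 \<le> Q2 - 1 \<longrightarrow>
        \<pi> (0, Q2 - i2) = B1 * q1 ^ (Q1 - 1) * q3 *
          (\<Sum>k=0..i2. A2 ^ (i2 - k) * q2 ^ k * real ((Q1 + k - 1) choose k))) \<and>
     \<pi> (0, 0) =
        s1 / mu * B2 * q2 ^ (Q2 - 1) * q3 *
          (\<Sum>k=0..Q1 - 1. A1 ^ (Q1 - 1 - k) * q1 ^ k * real ((Q2 + k - 1) choose k))
      + s2 / mu * B1 * q1 ^ (Q1 - 1) * q3 *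
          (\<Sum>k=0..Q2 - 1. A2 ^ (Q2 - 1 - k) * q2 ^ k * real ((Q1 + k - 1) choose k)))
   \<longleftrightarrow> (\<forall>y\<in>states. \<pi> y = pi_closed y)"
proof -
  have interior: "\<pi> (Q1 - (Q1 - j1), Q2 - (Q2 - j2))
        = real ((Q1 - j1 + (Q2 - j2)) choose (Q1 - j1)) * q1 ^ (Q1 - j1) * q2 ^ (Q2 - j2) * q3
      \<longleftrightarrow> \<pi> (j1, j2) = pi_closed (j1, j2)"
    if "1 \<le> j1" "j1 \<le> Q1" "1 \<le> j2" "j2 \<le> Q2" for j1 j2
    using that by (simp add: pi_closed_interior)
  have edge1: "\<pi> (Q1 - (Q1 - j1), 0) = B2 * q2 ^ (Q2 - 1) * q3 *
          (\<Sum>k=0..Q1 - j1. A1 ^ (Q1 - j1 - k) * q1 ^ k * real ((Q2 + k - 1) choose k))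
      \<longleftrightarrow> \<pi> (j1, 0) = pi_closed (j1, 0)"
    if "1 \<le> j1" "j1 \<le> Q1" for j1
    using that by (simp add: pi_closed_edge1 boundary_sum_def)
  have edge2: "\<pi> (0, Q2 - (Q2 - j2)) = B1 * q1 ^ (Q1 - 1) * q3 *
          (\<Sum>k=0..Q2 - j2. A2 ^ (Q2 - j2 - k) * q2 ^ k * real ((Q1 + k - 1) choose k))
      \<longleftrightarrow> \<pi> (0, j2) = pi_closed (0, j2)"
    if "1 \<le> j2" "j2 \<le> Q2" for j2
    using that by (simp add: pi_closed_edge2 boundary_sum_def)
  show ?thesis
    unfolding ball_states_iff all_le_pred_reflect2[OF Q1 Q2] all_le_pred_reflect[OF Q1] all_le_pred_reflect[OF Q2]
    using interior edge1 edge2 by (simp add: pi_closed_origin boundary_sum_def)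
qed

end

theorem theorem3:
  fixes Q1 Q2 :: nat and l1 l2 mu p12 p21 s s1 s2 q1 q2 q3 A1 A2 B1 B2 :: real
    and \<pi> :: "nat \<times> nat \<Rightarrow> real"
  assumes "1 \<le> Q1" "1 \<le> Q2"
    and "0 < l1" "0 < l2" "0 < mu"
    and "0 \<le> p12" "p12 \<le> 1" "0 \<le> p21" "p21 \<le> 1"
    and "s = l1 + l2" "s1 = l1 + l2 * p21" "s2 = l2 + l1 * p12"
    and "q1 = l1 / (s + mu)" "q2 = l2 / (s + mu)" "q3 = mu / (s + mu)"
    and "A1 = s1 / (s1 + mu)" "A2 = s2 / (s2 + mu)"
    and "B1 = l1 / (s2 + mu)" "B2 = l2 / (s1 + mu)"
  shows "inv_stationary Q1 Q2 l1 l2 p12 p21 mu \<pi> \<longleftrightarrow>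
     (\<forall>i1 i2. i1 \<le> Q1 - 1 \<and> i2 \<le> Q2 - 1 \<longrightarrow>
        \<pi> (Q1 - i1, Q2 - i2) = real ((i1 + i2) choose i1) * q1 ^ i1 * q2 ^ i2 * q3) \<and>
     (\<forall>i1. i1 \<le> Q1 - 1 \<longrightarrow>
        \<pi> (Q1 - i1, 0) = B2 * q2 ^ (Q2 - 1) * q3 *
          (\<Sum>k=0..i1. A1 ^ (i1 - k) * q1 ^ k * real ((Q2 + k - 1) choose k))) \<and>
     (\<forall>i2. i2 \<le> Q2 - 1 \<longrightarrow>
        \<pi> (0, Q2 - i2) = B1 * q1 ^ (Q1 - 1) * q3 *
          (\<Sum>k=0..i2. A2 ^ (i2 - k) * q2 ^ k * real ((Q1 + k - 1) choose k))) \<and>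
     \<pi> (0, 0) =
        s1 / mu * B2 * q2 ^ (Q2 - 1) * q3 *
          (\<Sum>k=0..Q1 - 1. A1 ^ (Q1 - 1 - k) * q1 ^ k * real ((Q2 + k - 1) choose k))
      + s2 / mu * B1 * q1 ^ (Q1 - 1) * q3 *
          (\<Sum>k=0..Q2 - 1. A2 ^ (Q2 - 1 - k) * q2 ^ k * real ((Q1 + k - 1) choose k))"
proof -
  interpret inventory_model Q1 Q2 l1 l2 mu p12 p21 s s1 s2 q1 q2 q3 A1 A2 B1 B2
    using assms by unfold_locales
  show ?thesis
    using stationary_iff_eq_pi_closed formulas_iff_eq_pi_closed by simp
qed

end
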